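(* Suppose $h\in C^2(\overline R)$ with finite $C^2$ norm solves the height equation with $\inf_Rh_p>0$, and that $h(q,p)\to H_\pm(p)$ pointwise as $q\to\pm\infty$ for some functions $H_\pm$. If $\mathscr S(H_+)=\mathscr S(H_-)=\mathscr S(H)$ and either $H_+\ge H$ on $[-1,0]$ or $H_+\le H$ on $[-1,0]$, then $H_+\equiv H$. The same holds with $H_+$ replaced by $H_-$.
   Context: Fix $\alpha\in(0,1)$, $\rho\in C^{2+\alpha}([-1,0])$ with $\rho>0$, $\rho_p\le0$, $H\in C^{3+\alpha}([-1,0])$ with $H(-1)=0$, $H(0)=1$, $H_p>0$, and $F>0$. Let $R=\mathbb R\times(-1,0)$ (coordinates $(q,p)$), $T=\mathbb R\times\{0\}$, $B=\mathbb R\times\{-1\}$. The height equation for $h$ is $\big(-\frac{1+h_q^2}{2h_p^2}+\frac1{2H_p^2}\big)_p+\big(\frac{h_q}{h_p}\big)_q-\frac1{F^2}\rho_p(h-H)=0$ in $R$, $\frac{1+h_q^2}{2h_p^2}-\frac1{2H_p^2}+\frac1{F^2}\rho(h-1)=0$ on $T$, $h=0$ on $B$. The flow force of a $q$-independent function $K=K(p)$ with $K_p>0$ is $\mathscr S(K)=\int_{-1}^0\Big[\frac1{2K_p^2}+\frac1{2H_p^2}-\frac1{F^2}\rho(K-H)-\frac1{F^2}\int_0^p\rho H_p\,dp'\Big]K_p\,dp$. *)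

theory Defs
  imports "HOL-Analysis.Analysis"
begin

definition Rbar :: "(real \<times> real) set" where
  "Rbar = {z. -1 \<le> snd z \<and> snd z \<le> 0}"

definition Ropen :: "(real \<times> real) set" where
  "Ropen = {z. -1 < snd z \<and> snd z < 0}"

definition dI :: "(real \<Rightarrow> real) \<Rightarrow> real \<Rightarrow> real" where
  "dI f p = vector_derivative f (at p within {-1..0})"

definition pq :: "(real \<times> real \<Rightarrow> real) \<Rightarrow> real \<times> real \<Rightarrow> real" where
  "pq h z = vector_derivative (\<lambda>t. h (t, snd z)) (at (fst z))"

definition pp :: "(real \<times> real \<Rightarrow> real) \<Rightarrow> real \<times> real \<Rightarrow> real" where
  "pp h z = vector_derivative (\<lambda>t. h (fst z, t)) (at (snd z) within {-1..0})"

definition holder_on_I :: "real \<Rightarrow> (real \<Rightarrow> real) \<Rightarrow> bool" where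
  "holder_on_I \<alpha> f \<longleftrightarrow> (\<exists>C. \<forall>x\<in>{-1..0}. \<forall>y\<in>{-1..0}. \<bar>f x - f y\<bar> \<le> C * \<bar>x - y\<bar> powr \<alpha>)"

definition C_k_alpha :: "nat \<Rightarrow> real \<Rightarrow> (real \<Rightarrow> real) \<Rightarrow> bool" where
  "C_k_alpha k \<alpha> f \<longleftrightarrow> (\<exists>D :: nat \<Rightarrow> real \<Rightarrow> real.
      (\<forall>x\<in>{-1..0}. D 0 x = f x) \<and>
      (\<forall>j<k. \<forall>x\<in>{-1..0}. (D j has_real_derivative D (Suc j) x) (at x within {-1..0})) \<and>
      holder_on_I \<alpha> (D k))"

definition C2_bounded_strip :: "(real \<times> real \<Rightarrow> real) \<Rightarrow> bool" where
  "C2_bounded_strip h \<longleftrightarrow> (\<exists>(Dh :: real \<times> real \<Rightarrow> ((real \<times> real) \<Rightarrow>\<^sub>L real))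
       (D2h :: real \<times> real \<Rightarrow> ((real \<times> real) \<Rightarrow>\<^sub>L ((real \<times> real) \<Rightarrow>\<^sub>L real))).
      (\<forall>z\<in>Rbar. (h has_derivative blinfun_apply (Dh z)) (at z within Rbar) \<and>
                 (Dh has_derivative blinfun_apply (D2h z)) (at z within Rbar)) \<and>
      continuous_on Rbar D2h \<and>
      bounded (h ` Rbar) \<and> bounded (Dh ` Rbar) \<and> bounded (D2h ` Rbar))"

definition height_eq :: "(real \<Rightarrow> real) \<Rightarrow> (real \<Rightarrow> real) \<Rightarrow> real \<Rightarrow> (real \<times> real \<Rightarrow> real) \<Rightarrow> bool" where
  "height_eq \<rho> H F h \<longleftrightarrow>
     (\<forall>q p. (q, p) \<in> Ropen \<longrightarrow>
        deriv (\<lambda>t. - (1 + (pq h (q, t))\<^sup>2) / (2 * (pp h (q, t))\<^sup>2) + 1 / (2 * (dI H t)\<^sup>2)) p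
        + deriv (\<lambda>s. pq h (s, p) / pp h (s, p)) q
        - (1 / F\<^sup>2) * dI \<rho> p * (h (q, p) - H p) = 0) \<and>
     (\<forall>q. (1 + (pq h (q, 0))\<^sup>2) / (2 * (pp h (q, 0))\<^sup>2) - 1 / (2 * (dI H 0)\<^sup>2)
          + (1 / F\<^sup>2) * \<rho> 0 * (h (q, 0) - 1) = 0) \<and>
     (\<forall>q. h (q, -1) = 0)"

text \<open>Flow force of a q-independent K; note int_0^p g = - int_p^0 g for p in [-1,0].\<close>
definition flow_force :: "(real \<Rightarrow> real) \<Rightarrow> (real \<Rightarrow> real) \<Rightarrow> real \<Rightarrow> (real \<Rightarrow> real) \<Rightarrow> real" where
  "flow_force \<rho> H F K = integral {-1..0} (\<lambda>p.
      (1 / (2 * (dI K p)\<^sup>2) + 1 / (2 * (dI H p)\<^sup>2) - (1 / F\<^sup>2) * \<rho> p * (K p - H p)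
       - (1 / F\<^sup>2) * (- integral {p..0} (\<lambda>s. \<rho> s * dI H s))) * dI K p)"

end

theory Submission
  imports Defs
begin

text \<open>Let K be the limit profile of h along q \<rightarrow> +\<infinity> (or -\<infinity>). The uniform C^2 bounds give
  h_q \<rightarrow> 0 and h_p(q,\<cdot>) \<rightarrow> K', so the top and bottom boundary conditions pass to K. The height
  equation itself passes to the limit after integration in p: the q-derivative of
  \<Phi>(q) = \<integral> h_q/h_p dp is the remaining part of the equation, and since \<Phi> is bounded its
  averages over q-windows of any length T are O(1/T); hence K solves the q-independent height
  equation. For such K, with w = K - H, one finds an explicit \<Psi> vanishing at p = -1 and p = 0
  such that the flow force integrands satisfy
  S-integrand(K) - S-integrand(H) = \<Psi>' + (K' - H')^3 / (4 K'^2 H'^2).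
  If w has a sign, the ODE gives K' - H' the same sign, so S(K) = S(H) forces K' = H', and
  K = H by the bottom boundary condition.\<close>

lemma Rbar_Pair_iff [simp]: "(q, p) \<in> Rbar \<longleftrightarrow> p \<in> {-1..0}"
  by (auto simp: Rbar_def)

lemma Ropen_Pair_iff [simp]: "(q, p) \<in> Ropen \<longleftrightarrow> p \<in> {-1<..<0}"
  by (auto simp: Ropen_def)

lemma dI_eqI:
  assumes "(f has_real_derivative f') (at t within {-1..0})" "t \<in> {-1..0}"
  shows "dI f t = f'"
  unfolding dI_def using assms
  by (intro vector_derivative_within_closed_interval)
     (auto simp: has_real_derivative_iff_has_vector_derivative)

lemma C_k_alpha_SucD:
  assumes "C_k_alpha (Suc k) \<alpha> f"
  obtains f' where "\<And>x. x \<in> {-1..0} \<Longrightarrow> (f has_real_derivative f' x) (at x within {-1..0})"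
    and "C_k_alpha k \<alpha> f'"
proof -
  obtain D where D0: "\<forall>x\<in>{-1..0}. D 0 x = f x"
    and D: "\<forall>j<Suc k. \<forall>x\<in>{-1..0}. (D j has_real_derivative D (Suc j) x) (at x within {-1..0})"
    and hol: "holder_on_I \<alpha> (D (Suc k))"
    using assms unfolding C_k_alpha_def by blast
  show ?thesis
  proof
    show "(f has_real_derivative D 1 x) (at x within {-1..0})" if x: "x \<in> {-1..0}" for x
    proof (rule has_field_derivative_transform_within[OF _ zero_less_one x])
      show "(D 0 has_real_derivative D 1 x) (at x within {-1..0})" using D x by simp
    qed (use D0 in auto)
    show "C_k_alpha k \<alpha> (D 1)"
      unfolding C_k_alpha_def using D hol by (intro exI[of _ "\<lambda>j. D (Suc j)"]) auto
  qed
qed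

lemma taylor_remainder_le_of_lipschitz_deriv:
  fixes f :: "real \<Rightarrow> real"
  assumes f': "\<And>x. x \<in> {a..b} \<Longrightarrow> (f has_real_derivative f' x) (at x within {a..b})"
    and lip: "\<And>u v. u \<in> {a..b} \<Longrightarrow> v \<in> {a..b} \<Longrightarrow> \<bar>f' u - f' v\<bar> \<le> L * \<bar>u - v\<bar>"
    and st: "s \<in> {a..b}" "t \<in> {a..b}"
  shows "\<bar>f s - f t - f' t * (s - t)\<bar> \<le> L * (s - t)\<^sup>2"
proof -
  let ?I = "{min s t..max s t}"
  have sub: "?I \<subseteq> {a..b}" using st by auto
  have deriv: "((\<lambda>u. f u - f' t * u) has_real_derivative f' x - f' t) (at x within ?I)"
    if "x \<in> ?I" for x
  proof -
    have "x \<in> {a..b}" using that sub by blast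
    from DERIV_subset[OF f'[OF this] sub] show ?thesis by (auto intro!: derivative_eq_intros)
  qed
  have bound: "\<bar>f' x - f' t\<bar> \<le> L * \<bar>s - t\<bar>" if "x \<in> ?I" for x
  proof -
    have "\<bar>f' x - f' t\<bar> \<le> L * \<bar>x - t\<bar>" using lip[of x t] that sub st by blast
    also have "\<dots> \<le> L * \<bar>s - t\<bar>"
    proof (cases "s = t")
      case False
      have "0 \<le> L * \<bar>s - t\<bar>" using abs_ge_zero lip[OF st] by (rule order_trans)
      with False have "0 \<le> L" by (simp add: zero_le_mult_iff)
      then show ?thesis using that by (auto intro!: mult_left_mono)
    qed (use that in simp)
    finally show ?thesis .
  qed
  have "norm ((f s - f' t * s) - (f t - f' t * t)) \<le> (L * \<bar>s - t\<bar>) * norm (s - t)"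
    by (rule field_differentiable_bound[of ?I "\<lambda>u. f u - f' t * u", OF _ deriv])
       (use bound in auto)
  then show ?thesis by (simp add: power2_eq_square algebra_simps abs_mult_self_eq)
qed

lemma tendsto_of_filter_cauchy:
  fixes f :: "'a \<Rightarrow> real"
  assumes "F \<noteq> bot"
    and "\<And>e. e > 0 \<Longrightarrow> \<exists>P. eventually P F \<and> (\<forall>x y. P x \<and> P y \<longrightarrow> \<bar>f x - f y\<bar> < e)"
  shows "\<exists>l. (f \<longlongrightarrow> l) F"
proof -
  have "cauchy_filter (filtermap f F)"
    unfolding cauchy_filter_metric_filtermap dist_real_def using assms(2) by blast
  from cauchy_filter_complete_converges[OF this complete_UNIV]
  obtain l where "filtermap f F \<le> nhds l"
    using assms(1) by (auto simp: filtermap_bot_iff)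
  then show ?thesis unfolding filterlim_def by blast
qed

lemma integral_to_zero_has_real_derivative:
  fixes g :: "real \<Rightarrow> real"
  assumes g: "continuous_on {-1..0} g" and t: "t \<in> {-1..0}"
  shows "((\<lambda>t. integral {t..0} g) has_real_derivative - g t) (at t within {-1..0})"
proof -
  have "((\<lambda>u. integral {-1..u} g) has_vector_derivative g t) (at t within {-1..0})"
    by (rule integral_has_vector_derivative[OF g t])
  then have "((\<lambda>u. integral {-1..0} g - integral {-1..u} g) has_real_derivative - g t)
      (at t within {-1..0})"
    by (auto intro!: derivative_eq_intros
        simp: has_real_derivative_iff_has_vector_derivative[symmetric])
  then show ?thesis
  proof (rule has_field_derivative_transform_within[OF _ zero_less_one t])
    fix u :: real assume "u \<in> {-1..0}"
    then have "integral {-1..u} g + integral {u..0} g = integral {-1..0} g"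
      using integrable_continuous_real[OF g] by (intro Henstock_Kurzweil_Integration.integral_combine) auto
    then show "integral {-1..0} g - integral {-1..u} g = integral {u..0} g" by linarith
  qed
qed

lemma blinfun_apply_horizontal:
  "(\<lambda>x. blinfun_apply L (x, 0)) = (\<lambda>x. x *\<^sub>R blinfun_apply L (1, 0))"
  for L :: "(real \<times> real) \<Rightarrow>\<^sub>L 'b::real_normed_vector"
proof
  fix x :: real
  have "blinfun_apply L (x *\<^sub>R (1, 0)) = x *\<^sub>R blinfun_apply L (1, 0)" by (rule blinfun.scaleR_right)
  then show "blinfun_apply L (x, 0) = x *\<^sub>R blinfun_apply L (1, 0)" by simp
qed

lemma blinfun_apply_vertical:
  "(\<lambda>x. blinfun_apply L (0, x)) = (\<lambda>x. x *\<^sub>R blinfun_apply L (0, 1))"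
  for L :: "(real \<times> real) \<Rightarrow>\<^sub>L 'b::real_normed_vector"
proof
  fix x :: real
  have "blinfun_apply L (x *\<^sub>R (0, 1)) = x *\<^sub>R blinfun_apply L (0, 1)" by (rule blinfun.scaleR_right)
  then show "blinfun_apply L (0, x) = x *\<^sub>R blinfun_apply L (0, 1)" by simp
qed

lemma has_vector_derivative_horizontal:
  fixes g :: "real \<times> real \<Rightarrow> 'b::real_normed_vector"
  assumes "(g has_derivative blinfun_apply L) (at (q, p) within Rbar)" "p \<in> {-1..0}"
  shows "((\<lambda>s. g (s, p)) has_vector_derivative blinfun_apply L (1, 0)) (at q)"
proof -
  have "range (\<lambda>s. (s, p)) \<subseteq> Rbar" using assms(2) by auto
  then have "(g has_derivative blinfun_apply L) (at (q, p) within range (\<lambda>s. (s, p)))"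
    using assms(1) has_derivative_subset by blast
  note g = this
  have "((\<lambda>s. (s, p)) has_derivative (\<lambda>x. (x, 0))) (at q)"
    by (auto intro!: derivative_eq_intros)
  from has_derivative_in_compose[OF this g]
  show ?thesis by (simp add: has_vector_derivative_def blinfun_apply_horizontal)
qed

lemma has_vector_derivative_vertical:
  fixes g :: "real \<times> real \<Rightarrow> 'b::real_normed_vector"
  assumes "(g has_derivative blinfun_apply L) (at (q, p) within Rbar)"
  shows "((\<lambda>t. g (q, t)) has_vector_derivative blinfun_apply L (0, 1)) (at p within {-1..0})"
proof -
  have "(\<lambda>t. (q, t)) ` {-1..0} \<subseteq> Rbar" by auto
  then have "(g has_derivative blinfun_apply L) (at (q, p) within (\<lambda>t. (q, t)) ` {-1..0})"
    using assms has_derivative_subset by blast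
  note g = this
  have "((\<lambda>t. (q, t)) has_derivative (\<lambda>x. (0, x))) (at p within {-1..0})"
    by (auto intro!: derivative_eq_intros)
  from has_derivative_in_compose[OF this g]
  show ?thesis by (simp add: has_vector_derivative_def blinfun_apply_vertical)
qed

lemma continuous_on_vertical:
  "continuous_on Rbar g \<Longrightarrow> S \<subseteq> {-1..0} \<Longrightarrow> continuous_on S (\<lambda>t. g (q, t))"
  by (rule continuous_on_compose2[of Rbar g S "\<lambda>t. (q, t)"]) (auto intro!: continuous_intros)

text \<open>The two properties of q \<rightarrow> \<plusminus>\<infinity> that are used: invariance under translations, and the
  existence, for each window length T, of windows [s n, s n + T] escaping along the filter.\<close>

definition translation_filter :: "real filter \<Rightarrow> bool" where
  "translation_filter Fl \<longleftrightarrow> Fl \<noteq> bot \<and> (\<forall>\<tau>. filterlim (\<lambda>q. q + \<tau>) Fl Fl) \<and>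
     (\<forall>T>0. \<exists>s :: nat \<Rightarrow> real. \<forall>\<xi>. (\<forall>n. s n \<le> \<xi> n \<and> \<xi> n \<le> s n + T)
        \<longrightarrow> filterlim \<xi> Fl sequentially)"

lemma translation_filter_at_top: "translation_filter at_top"
  unfolding translation_filter_def
proof (intro conjI allI impI)
  show "filterlim (\<lambda>q. q + \<tau>) at_top at_top" for \<tau> :: real
  proof -
    have "LIM q at_top. \<tau> + q :> at_top"
      by (rule filterlim_tendsto_add_at_top[OF tendsto_const filterlim_ident])
    then show ?thesis by (simp add: add.commute)
  qed
  show "\<exists>s. \<forall>\<xi>. (\<forall>n. s n \<le> \<xi> n \<and> \<xi> n \<le> s n + T) \<longrightarrow> filterlim \<xi> at_top sequentially"
    for T :: real
    by (intro exI[of _ real] allI impI filterlim_at_top_mono[OF filterlim_real_sequentially])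
       auto
qed simp

lemma translation_filter_at_bot: "translation_filter at_bot"
  unfolding translation_filter_def
proof (intro conjI allI impI)
  show "filterlim (\<lambda>q. q + \<tau>) at_bot at_bot" for \<tau> :: real
    using filterlim_tendsto_add_at_bot_iff[OF tendsto_const[of \<tau>], of "\<lambda>x. x" at_bot]
    by (simp add: add.commute filterlim_ident)
  show "\<exists>s. \<forall>\<xi>. (\<forall>n. s n \<le> \<xi> n \<and> \<xi> n \<le> s n + T) \<longrightarrow> filterlim \<xi> at_bot sequentially"
    for T :: real
  proof (intro exI[of _ "\<lambda>n. - real n - T"] allI impI)
    fix \<xi> :: "nat \<Rightarrow> real"
    assume window: "\<forall>n. - real n - T \<le> \<xi> n \<and> \<xi> n \<le> - real n - T + T"
    have "real n \<le> - \<xi> n" for n using window[rule_format, of n] by linarith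
    then have "filterlim (\<lambda>n. - \<xi> n) at_top sequentially"
      by (intro filterlim_at_top_mono[OF filterlim_real_sequentially] always_eventually) auto
    then show "filterlim \<xi> at_bot sequentially" by (simp add: filterlim_uminus_at_bot)
  qed
qed simp

lemma norm_blinfun_apply2_le:
  "norm (blinfun_apply (blinfun_apply M u) v) \<le> norm M * norm u * norm v"
proof -
  have "norm (blinfun_apply (blinfun_apply M u) v) \<le> norm (blinfun_apply M u) * norm v"
    by (rule norm_blinfun)
  also have "\<dots> \<le> norm M * norm u * norm v"
    by (intro mult_right_mono norm_blinfun) simp
  finally show ?thesis .
qed

lemma has_real_derivative_of_quadratic_remainder:
  fixes K :: "real \<Rightarrow> real"
  assumes "\<And>s. s \<in> S \<Longrightarrow> \<bar>K s - K t - a * (s - t)\<bar> \<le> C * (s - t)\<^sup>2"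
  shows "(K has_real_derivative a) (at t within S)"
proof -
  have "((\<lambda>s. (K s - K t) / (s - t) - a) \<longlongrightarrow> 0) (at t within S)"
  proof (rule Lim_null_comparison)
    show "eventually (\<lambda>s. norm ((K s - K t) / (s - t) - a) \<le> C * \<bar>s - t\<bar>) (at t within S)"
      unfolding eventually_at_filter
    proof (intro always_eventually allI impI)
      fix s assume s: "s \<noteq> t" "s \<in> S"
      have "(K s - K t) / (s - t) - a = (K s - K t - a * (s - t)) / (s - t)"
        using s by (simp add: field_simps)
      then have "norm ((K s - K t) / (s - t) - a) = \<bar>K s - K t - a * (s - t)\<bar> / \<bar>s - t\<bar>"
        by simp
      also have "\<dots> \<le> C * (s - t)\<^sup>2 / \<bar>s - t\<bar>"
        using assms[OF s(2)] by (simp add: divide_right_mono)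
      also have "\<dots> = C * \<bar>s - t\<bar>"
        using s(1) by (simp add: field_simps power2_eq_square)
      finally show "norm ((K s - K t) / (s - t) - a) \<le> C * \<bar>s - t\<bar>" .
    qed
    show "((\<lambda>s. C * \<bar>s - t\<bar>) \<longlongrightarrow> 0) (at t within S)"
      by (auto intro!: tendsto_eq_intros)
  qed
  from tendsto_add[OF this tendsto_const[of a]] show ?thesis
    by (simp add: has_field_derivative_iff)
qed

section \<open>Uniform C^2 bounds on the strip\<close>

locale strip =
  fixes h :: "real \<times> real \<Rightarrow> real"
    and Dh :: "real \<times> real \<Rightarrow> ((real \<times> real) \<Rightarrow>\<^sub>L real)"
    and D2h :: "real \<times> real \<Rightarrow> ((real \<times> real) \<Rightarrow>\<^sub>L ((real \<times> real) \<Rightarrow>\<^sub>L real))"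
    and C \<delta> :: real
  assumes h_deriv: "\<And>z. z \<in> Rbar \<Longrightarrow> (h has_derivative blinfun_apply (Dh z)) (at z within Rbar)"
    and Dh_deriv: "\<And>z. z \<in> Rbar \<Longrightarrow> (Dh has_derivative blinfun_apply (D2h z)) (at z within Rbar)"
    and D2h_cont: "continuous_on Rbar D2h"
    and h_bound: "\<And>z. z \<in> Rbar \<Longrightarrow> \<bar>h z\<bar> \<le> C"
    and Dh_bound: "\<And>z. z \<in> Rbar \<Longrightarrow> norm (Dh z) \<le> C"
    and D2h_bound: "\<And>z. z \<in> Rbar \<Longrightarrow> norm (D2h z) \<le> C"
    and delta_pos: "\<delta> > 0"
    and pp_ge: "\<And>z. z \<in> Ropen \<Longrightarrow> pp h z \<ge> \<delta>"
begin

definition "hq z = blinfun_apply (Dh z) (1, 0)"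
definition "hp z = blinfun_apply (Dh z) (0, 1)"
definition "hqq z = blinfun_apply (blinfun_apply (D2h z) (1, 0)) (1, 0)"
definition "hqp z = blinfun_apply (blinfun_apply (D2h z) (1, 0)) (0, 1)"
definition "hpq z = blinfun_apply (blinfun_apply (D2h z) (0, 1)) (1, 0)"
definition "hpp z = blinfun_apply (blinfun_apply (D2h z) (0, 1)) (0, 1)"

lemma h_has_derivative_q: "p \<in> {-1..0} \<Longrightarrow> ((\<lambda>s. h (s, p)) has_real_derivative hq (s, p)) (at s)"
  using has_vector_derivative_horizontal[OF h_deriv[of "(s, p)"]]
  by (simp add: hq_def has_real_derivative_iff_has_vector_derivative)

lemma h_has_derivative_p:
  "t \<in> {-1..0} \<Longrightarrow> ((\<lambda>t. h (q, t)) has_real_derivative hp (q, t)) (at t within {-1..0})"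
  using has_vector_derivative_vertical[OF h_deriv[of "(q, t)"]]
  by (simp add: hp_def has_real_derivative_iff_has_vector_derivative)

lemma Dh_has_derivative_q:
  assumes "p \<in> {-1..0}"
  shows "((\<lambda>s. blinfun_apply (Dh (s, p)) v) has_real_derivative
    blinfun_apply (blinfun_apply (D2h (s, p)) (1, 0)) v) (at s)"
proof -
  have "((\<lambda>s. Dh (s, p)) has_derivative (\<lambda>x. x *\<^sub>R blinfun_apply (D2h (s, p)) (1, 0))) (at s)"
    using has_vector_derivative_horizontal[OF Dh_deriv[of "(s, p)"]] assms
    by (simp add: has_vector_derivative_def)
  from blinfun.FDERIV[OF this has_derivative_const[of v]] show ?thesis
    by (simp add: has_real_derivative_iff_has_vector_derivative has_vector_derivative_def
        blinfun.scaleR_left)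
qed

lemma Dh_has_derivative_p:
  assumes "t \<in> {-1..0}"
  shows "((\<lambda>t. blinfun_apply (Dh (q, t)) v) has_real_derivative
    blinfun_apply (blinfun_apply (D2h (q, t)) (0, 1)) v) (at t within {-1..0})"
proof -
  have "((\<lambda>t. Dh (q, t)) has_derivative (\<lambda>x. x *\<^sub>R blinfun_apply (D2h (q, t)) (0, 1)))
      (at t within {-1..0})"
    using has_vector_derivative_vertical[OF Dh_deriv[of "(q, t)"]] assms
    by (simp add: has_vector_derivative_def)
  from blinfun.FDERIV[OF this has_derivative_const[of v]] show ?thesis
    by (simp add: has_real_derivative_iff_has_vector_derivative has_vector_derivative_def
        blinfun.scaleR_left)
qed

lemma hq_has_derivative_q: "p \<in> {-1..0} \<Longrightarrow> ((\<lambda>s. hq (s, p)) has_real_derivative hqq (s, p)) (at s)"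
  unfolding hq_def hqq_def by (rule Dh_has_derivative_q)

lemma hp_has_derivative_q: "p \<in> {-1..0} \<Longrightarrow> ((\<lambda>s. hp (s, p)) has_real_derivative hqp (s, p)) (at s)"
  unfolding hp_def hqp_def by (rule Dh_has_derivative_q)

lemma hq_has_derivative_p:
  "t \<in> {-1..0} \<Longrightarrow> ((\<lambda>t. hq (q, t)) has_real_derivative hpq (q, t)) (at t within {-1..0})"
  unfolding hq_def hpq_def by (rule Dh_has_derivative_p)

lemma hp_has_derivative_p:
  "t \<in> {-1..0} \<Longrightarrow> ((\<lambda>t. hp (q, t)) has_real_derivative hpp (q, t)) (at t within {-1..0})"
  unfolding hp_def hpp_def by (rule Dh_has_derivative_p)

lemma pq_h_eq: "p \<in> {-1..0} \<Longrightarrow> pq h (s, p) = hq (s, p)"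
  unfolding pq_def using h_has_derivative_q[of p s]
  by (simp add: has_real_derivative_iff_has_vector_derivative vector_derivative_at)

lemma pp_h_eq: "t \<in> {-1..0} \<Longrightarrow> pp h (q, t) = hp (q, t)"
  unfolding pp_def using h_has_derivative_p[of t q]
  by (simp add: has_real_derivative_iff_has_vector_derivative vector_derivative_within_closed_interval)

lemma C_nonneg: "0 \<le> C"
  using h_bound[of "(0, 0)"] by simp

lemma abs_hq_le: "z \<in> Rbar \<Longrightarrow> \<bar>hq z\<bar> \<le> C"
  using norm_blinfun[of "Dh z" "(1, 0)"] Dh_bound[of z] by (simp add: hq_def norm_Pair)

lemma abs_hqq_le: "z \<in> Rbar \<Longrightarrow> \<bar>hqq z\<bar> \<le> C"
  using norm_blinfun_apply2_le[of "D2h z" "(1, 0)" "(1, 0)"] D2h_bound[of z]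
  by (simp add: hqq_def norm_Pair)

lemma abs_hpp_le: "z \<in> Rbar \<Longrightarrow> \<bar>hpp z\<bar> \<le> C"
  using norm_blinfun_apply2_le[of "D2h z" "(0, 1)" "(0, 1)"] D2h_bound[of z]
  by (simp add: hpp_def norm_Pair)

lemma h_cont: "continuous_on Rbar h"
  using h_deriv has_derivative_continuous continuous_on_eq_continuous_within by blast

lemma Dh_cont: "continuous_on Rbar Dh"
  using Dh_deriv has_derivative_continuous continuous_on_eq_continuous_within by blast

lemma hq_cont: "continuous_on Rbar hq"
  unfolding hq_def by (intro continuous_intros Dh_cont)

lemma hp_cont: "continuous_on Rbar hp"
  unfolding hp_def by (intro continuous_intros Dh_cont)

lemma hqq_cont: "continuous_on Rbar hqq"
  unfolding hqq_def by (intro continuous_intros D2h_cont)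

lemma hqp_cont: "continuous_on Rbar hqp"
  unfolding hqp_def by (intro continuous_intros D2h_cont)

lemma hp_ge: "z \<in> Rbar \<Longrightarrow> hp z \<ge> \<delta>"
proof (cases z)
  case (Pair q t)
  assume "z \<in> Rbar"
  then have t: "t \<in> closure {-1<..<0}" using Pair by simp
  have "continuous_on (closure {-1<..<0}) (\<lambda>t. hp (q, t))"
    by (rule continuous_on_vertical[OF hp_cont]) auto
  from continuous_ge_on_closure[OF this t] have "hp (q, t) \<ge> \<delta>"
    using pp_ge pp_h_eq by force
  then show ?thesis using Pair by simp
qed

lemma hp_pos: "z \<in> Rbar \<Longrightarrow> hp z > 0"
  using hp_ge delta_pos by (meson less_le_trans)

lemma hp_lipschitz_p:
  "t \<in> {-1..0} \<Longrightarrow> u \<in> {-1..0} \<Longrightarrow> \<bar>hp (q, u) - hp (q, t)\<bar> \<le> C * \<bar>u - t\<bar>"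
  using field_differentiable_bound[of "{-1..0}" "\<lambda>t. hp (q, t)" "\<lambda>t. hpp (q, t)" C u t]
    hp_has_derivative_p abs_hpp_le by auto

lemma h_taylor_p:
  "s \<in> {-1..0} \<Longrightarrow> t \<in> {-1..0} \<Longrightarrow> \<bar>h (q, s) - h (q, t) - hp (q, t) * (s - t)\<bar> \<le> C * (s - t)\<^sup>2"
  by (rule taylor_remainder_le_of_lipschitz_deriv[OF h_has_derivative_p hp_lipschitz_p]) auto

lemma hq_lipschitz_q:
  assumes p: "p \<in> {-1..0}"
  shows "\<bar>hq (u, p) - hq (v, p)\<bar> \<le> C * \<bar>u - v\<bar>"
proof -
  have "norm (hq (u, p) - hq (v, p)) \<le> C * norm (u - v)"
  proof (rule field_differentiable_bound[of UNIV _ "\<lambda>s. hqq (s, p)"])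
    show "((\<lambda>s. hq (s, p)) has_real_derivative hqq (s, p)) (at s within UNIV)" for s
      using hq_has_derivative_q[OF p] by simp
    show "norm (hqq (s, p)) \<le> C" for s
      using abs_hqq_le p by simp
  qed auto
  then show ?thesis by simp
qed

lemma h_taylor_q:
  assumes p: "p \<in> {-1..0}"
  shows "\<bar>h (u, p) - h (v, p) - hq (v, p) * (u - v)\<bar> \<le> C * (u - v)\<^sup>2"
proof (rule taylor_remainder_le_of_lipschitz_deriv[where f' = "\<lambda>s. hq (s, p)"])
  show "((\<lambda>s. h (s, p)) has_real_derivative hq (x, p)) (at x within {min u v..max u v})" for x
    using h_has_derivative_q[OF p] by (rule has_field_derivative_at_within)
qed (use hq_lipschitz_q[OF p] in auto)

end

section \<open>The limit profile\<close>
locale strip_limit = strip +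
  fixes Fl :: "real filter" and K :: "real \<Rightarrow> real"
  assumes Fl: "translation_filter Fl"
    and h_tendsto: "\<And>p. p \<in> {-1..0} \<Longrightarrow> ((\<lambda>q. h (q, p)) \<longlongrightarrow> K p) Fl"
begin

lemma Fl_proper: "Fl \<noteq> bot"
  using Fl by (simp add: translation_filter_def)

lemma hq_tendsto_0:
  assumes p: "p \<in> {-1..0}"
  shows "((\<lambda>q. hq (q, p)) \<longlongrightarrow> 0) Fl"
proof (rule tendstoI)
  fix e :: real assume e: "e > 0"
  define \<tau> where "\<tau> = e / (2 * (C + 1))"
  have \<tau>: "\<tau> > 0" and C\<tau>: "C * \<tau> < e / 2"
    using e C_nonneg by (auto simp: \<tau>_def field_simps)
  have "((\<lambda>q. h (q + \<tau>, p)) \<longlongrightarrow> K p) Fl"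
    using filterlim_compose[OF h_tendsto[OF p]] Fl by (auto simp: translation_filter_def)
  then have "eventually (\<lambda>q. dist (h (q + \<tau>, p)) (K p) < e * \<tau> / 4 \<and>
      dist (h (q, p)) (K p) < e * \<tau> / 4) Fl"
    using e \<tau> by (intro eventually_conj tendstoD h_tendsto p) auto
  then show "eventually (\<lambda>q. dist (hq (q, p)) 0 < e) Fl"
  proof (rule eventually_mono)
    fix q
    assume close: "dist (h (q + \<tau>, p)) (K p) < e * \<tau> / 4 \<and> dist (h (q, p)) (K p) < e * \<tau> / 4"
    have "\<bar>h (q + \<tau>, p) - h (q, p) - hq (q, p) * \<tau>\<bar> \<le> C * \<tau>\<^sup>2"
      using h_taylor_q[OF p, of "q + \<tau>" q] by simp
    with close have "\<bar>hq (q, p)\<bar> * \<tau> \<le> e * \<tau> / 2 + (C * \<tau>) * \<tau>"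
      unfolding dist_real_def abs_le_iff abs_less_iff using \<tau>
      by (simp add: abs_mult power2_eq_square) linarith
    also have "\<dots> < e * \<tau>"
      using mult_strict_right_mono[OF C\<tau> \<tau>] by simp
    finally show "dist (hq (q, p)) 0 < e" using \<tau> by simp
  qed
qed

text \<open>h_p(q, t) is Cauchy along Fl: the difference quotient of h over a fixed p-step d
  converges (to that of K), and it is within C d of h_p(q, t).\<close>

lemma hp_convergent:
  assumes t: "t \<in> {-1..0}"
  shows "\<exists>l. ((\<lambda>q. hp (q, t)) \<longlongrightarrow> l) Fl"
proof (rule tendsto_of_filter_cauchy[OF Fl_proper])
  fix e :: real assume e: "e > 0"
  define d where "d = min (1/2) (e / (8 * (C + 1)))"
  have d: "d > 0" "d \<le> 1/2" and Cd: "C * d \<le> e / 8"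
    using e C_nonneg by (auto simp: d_def min_def field_simps)
  define s where "s = (if t \<le> -1/2 then t + d else t - d)"
  have s: "s \<in> {-1..0}" and sd: "\<bar>s - t\<bar> = d" and sd2: "(s - t)\<^sup>2 = d\<^sup>2"
    using t d by (auto simp: s_def)
  define \<eta> where "\<eta> = e * d / 8"
  have \<eta>: "\<eta> > 0" using e d by (simp add: \<eta>_def)
  define P where "P q \<longleftrightarrow> dist (h (q, s)) (K s) < \<eta> \<and> dist (h (q, t)) (K t) < \<eta>" for q
  have "eventually P Fl"
    unfolding P_def using \<eta> by (intro eventually_conj tendstoD h_tendsto s t)
  moreover have "\<bar>hp (q, t) - hp (q', t)\<bar> < e" if "P q" "P q'" for q q'
  proof -
    have "\<bar>h (q, s) - h (q, t) - hp (q, t) * (s - t)\<bar> \<le> C * d\<^sup>2"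
      "\<bar>h (q', s) - h (q', t) - hp (q', t) * (s - t)\<bar> \<le> C * d\<^sup>2"
      using h_taylor_p[OF s t] sd2 by auto
    with that have "\<bar>(hp (q, t) - hp (q', t)) * (s - t)\<bar> \<le> 4 * \<eta> + 2 * (C * d) * d"
      unfolding P_def dist_real_def abs_le_iff abs_less_iff
      by (simp add: algebra_simps power2_eq_square)
    also have "\<dots> \<le> e * d / 2 + 2 * (e / 8) * d"
      using Cd d by (simp add: \<eta>_def)
    also have "\<dots> < e * d" using e d by simp
    finally show ?thesis using d sd by (simp add: abs_mult)
  qed
  ultimately show "\<exists>P. eventually P Fl \<and> (\<forall>x y. P x \<and> P y \<longrightarrow> \<bar>hp (x, t) - hp (y, t)\<bar> < e)"
    by blast
qed

definition "dK t = Lim Fl (\<lambda>q. hp (q, t))"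

lemma hp_tendsto_dK: "t \<in> {-1..0} \<Longrightarrow> ((\<lambda>q. hp (q, t)) \<longlongrightarrow> dK t) Fl"
  using hp_convergent[of t] tendsto_Lim[OF Fl_proper] unfolding dK_def by blast

lemma dK_lipschitz: "t \<in> {-1..0} \<Longrightarrow> u \<in> {-1..0} \<Longrightarrow> \<bar>dK u - dK t\<bar> \<le> C * \<bar>u - t\<bar>"
  by (rule tendsto_le[OF Fl_proper tendsto_const tendsto_rabs[OF tendsto_diff[OF hp_tendsto_dK hp_tendsto_dK]]])
     (auto intro!: always_eventually hp_lipschitz_p)

lemma dK_ge: "t \<in> {-1..0} \<Longrightarrow> dK t \<ge> \<delta>"
  by (rule tendsto_lowerbound[OF hp_tendsto_dK]) (auto simp: Fl_proper intro!: always_eventually hp_ge)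

lemma dK_pos: "t \<in> {-1..0} \<Longrightarrow> dK t > 0"
  using dK_ge delta_pos by (meson less_le_trans)

lemma dK_cont: "continuous_on {-1..0} dK"
proof (rule lipschitz_on_continuous_on)
  show "C-lipschitz_on {-1..0} dK"
    by (rule lipschitz_onI) (auto simp: dist_real_def C_nonneg intro: dK_lipschitz[simplified])
qed

lemma K_has_derivative:
  assumes t: "t \<in> {-1..0}"
  shows "(K has_real_derivative dK t) (at t within {-1..0})"
proof (rule has_real_derivative_of_quadratic_remainder)
  fix s :: real assume s: "s \<in> {-1..0}"
  have "((\<lambda>q. \<bar>h (q, s) - h (q, t) - hp (q, t) * (s - t)\<bar>) \<longlongrightarrow>
      \<bar>K s - K t - dK t * (s - t)\<bar>) Fl"
    by (intro tendsto_intros h_tendsto hp_tendsto_dK s t)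
  then show "\<bar>K s - K t - dK t * (s - t)\<bar> \<le> C * (s - t)\<^sup>2"
    by (rule tendsto_le[OF Fl_proper tendsto_const]) (auto intro!: always_eventually h_taylor_p s t)
qed

end

section \<open>Passing to the limit in the height equation\<close>

text \<open>The height equation reads A_p + (B)_q = source, with the flux A and the quotient B below.\<close>

locale height_limit = strip_limit +
  fixes \<rho> H :: "real \<Rightarrow> real" and F :: real and \<rho>' H' H'' :: "real \<Rightarrow> real"
  assumes F_pos: "F > 0"
    and rho_deriv: "\<And>t. t \<in> {-1..0} \<Longrightarrow> (\<rho> has_real_derivative \<rho>' t) (at t within {-1..0})"
    and rho'_cont: "continuous_on {-1..0} \<rho>'"
    and H_deriv: "\<And>t. t \<in> {-1..0} \<Longrightarrow> (H has_real_derivative H' t) (at t within {-1..0})"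
    and H'_deriv: "\<And>t. t \<in> {-1..0} \<Longrightarrow> (H' has_real_derivative H'' t) (at t within {-1..0})"
    and H'_pos: "\<And>t. t \<in> {-1..0} \<Longrightarrow> H' t > 0"
    and height_eq: "height_eq \<rho> H F h"
begin

definition "A z = - (1 + (hq z)\<^sup>2) / (2 * (hp z)\<^sup>2) + 1 / (2 * (H' (snd z))\<^sup>2)"
definition "B z = hq z / hp z"
definition "Bq z = (hqq z * hp z - hq z * hqp z) / (hp z)\<^sup>2"
definition "source z = (1 / F\<^sup>2) * \<rho>' (snd z) * (h z - H (snd z))"
definition "A_lim t = - 1 / (2 * (dK t)\<^sup>2) + 1 / (2 * (H' t)\<^sup>2)"
definition "source_lim t = (1 / F\<^sup>2) * \<rho>' t * (K t - H t)"

lemma H_cont: "continuous_on {-1..0} H"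
  using H_deriv by (rule DERIV_continuous_on)

lemma H'_cont: "continuous_on {-1..0} H'"
  using H'_deriv by (rule DERIV_continuous_on)

lemma H'_cont_Rbar: "continuous_on Rbar (\<lambda>z. H' (snd z))"
  by (rule continuous_on_compose2[OF H'_cont]) (auto simp: Rbar_def intro!: continuous_intros)

lemma hp_nonzero: "z \<in> Rbar \<Longrightarrow> hp z \<noteq> 0"
  using hp_pos[of z] by simp

lemma H'_nonzero_Rbar: "z \<in> Rbar \<Longrightarrow> H' (snd z) \<noteq> 0"
  using H'_pos[of "snd z"] by (simp add: Rbar_def)

lemma A_cont: "continuous_on Rbar A"
  unfolding A_def using hp_nonzero H'_nonzero_Rbar
  by (intro continuous_intros hq_cont hp_cont H'_cont_Rbar) auto

lemma B_cont: "continuous_on Rbar B"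
  unfolding B_def using hp_nonzero by (intro continuous_intros hq_cont hp_cont) auto

lemma Bq_cont: "continuous_on Rbar Bq"
  unfolding Bq_def using hp_nonzero
  by (intro continuous_intros hq_cont hp_cont hqq_cont hqp_cont) auto

lemma source_cont: "continuous_on Rbar source"
proof -
  have "continuous_on Rbar (\<lambda>z. \<rho>' (snd z))" "continuous_on Rbar (\<lambda>z. H (snd z))"
    by (intro continuous_on_compose2[OF rho'_cont] continuous_on_compose2[OF H_cont];
        auto simp: Rbar_def intro!: continuous_intros)+
  then show ?thesis unfolding source_def by (intro continuous_intros h_cont)
qed

lemma B_has_derivative_q: "t \<in> {-1..0} \<Longrightarrow> ((\<lambda>s. B (s, t)) has_real_derivative Bq (q, t)) (at q)"
  unfolding B_def Bq_def using hp_pos[of "(q, t)"]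
  by (auto intro!: derivative_eq_intros hq_has_derivative_q hp_has_derivative_q
      simp: power2_eq_square)

lemma A_has_derivative_p:
  assumes t: "t \<in> {-1..0}"
  shows "((\<lambda>t. A (q, t)) has_real_derivative
      - hq (q, t) * hpq (q, t) / (hp (q, t))\<^sup>2 + (1 + (hq (q, t))\<^sup>2) * hpp (q, t) / (hp (q, t))^3
      - H'' t / (H' t)^3) (at t within {-1..0})"
proof -
  have "hp (q, t) \<noteq> 0" "H' t \<noteq> 0" using hp_nonzero H'_pos[OF t] t by auto
  then show ?thesis unfolding A_def snd_conv
    by (auto intro!: derivative_eq_intros hq_has_derivative_p[OF t] hp_has_derivative_p[OF t]
        H'_deriv[OF t] simp: field_simps power2_eq_square power3_eq_cube)
qed

lemma A_has_derivative_interior: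
  assumes t: "t \<in> {-1<..<0}"
  shows "((\<lambda>t. A (q, t)) has_real_derivative source (q, t) - Bq (q, t)) (at t)"
proof -
  have t': "t \<in> {-1..0}" using t by auto
  define X where "X = - hq (q, t) * hpq (q, t) / (hp (q, t))\<^sup>2
    + (1 + (hq (q, t))\<^sup>2) * hpp (q, t) / (hp (q, t))^3 - H'' t / (H' t)^3"
  have "((\<lambda>t. A (q, t)) has_real_derivative X) (at t within {-1..0})"
    unfolding X_def by (rule A_has_derivative_p[OF t'])
  moreover have "at t within {-1..0} = at t" using t by (intro at_within_interior) simp
  ultimately have X: "((\<lambda>t. A (q, t)) has_real_derivative X) (at t)" by simp
  \<comment> \<open>the form in which height_eq states A\<close>
  define A_literal where "A_literal t =
    - (1 + (pq h (q, t))\<^sup>2) / (2 * (pp h (q, t))\<^sup>2) + 1 / (2 * (dI H t)\<^sup>2)" for t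
  have "A_literal u = A (q, u)" if "u \<in> {-1..0}" for u
    using that by (simp add: A_literal_def A_def pq_h_eq pp_h_eq dI_eqI[OF H_deriv])
  then have "(A_literal has_real_derivative X) (at t)"
    by (intro has_field_derivative_transform_within_open[OF X _ t]) auto
  moreover have "(\<lambda>s. pq h (s, t) / pp h (s, t)) = (\<lambda>s. B (s, t))"
    using t' by (simp add: B_def pq_h_eq pp_h_eq)
  moreover have "deriv A_literal t + deriv (\<lambda>s. pq h (s, t) / pp h (s, t)) q
      - (1 / F\<^sup>2) * dI \<rho> t * (h (q, t) - H t) = 0"
    using height_eq t unfolding height_eq_def A_literal_def by simp
  ultimately have "X + Bq (q, t) - source (q, t) = 0"
    using DERIV_imp_deriv[OF B_has_derivative_q[OF t']] dI_eqI[OF rho_deriv[OF t'] t']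
    by (simp add: DERIV_imp_deriv source_def)
  with X show ?thesis by (simp add: DERIV_cong)
qed

lemma A_has_integral_p:
  assumes p: "p \<in> {-1..0}"
  shows "((\<lambda>t. source (q, t) - Bq (q, t)) has_integral A (q, 0) - A (q, p)) {p..0}"
proof (rule fundamental_theorem_of_calculus_interior)
  show "continuous_on {p..0} (\<lambda>t. A (q, t))"
    using p by (intro continuous_on_vertical[OF A_cont]) auto
  show "((\<lambda>t. A (q, t)) has_vector_derivative source (q, t) - Bq (q, t)) (at t)"
    if "t \<in> {p<..<0}" for t
    using A_has_derivative_interior[of t q] that p
    by (simp add: has_real_derivative_iff_has_vector_derivative)
qed (use p in simp)

lemma A_tendsto: "t \<in> {-1..0} \<Longrightarrow> ((\<lambda>q. A (q, t)) \<longlongrightarrow> A_lim t) Fl"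
  unfolding A_def A_lim_def snd_conv using dK_pos[of t]
  by (auto intro!: tendsto_eq_intros hq_tendsto_0 hp_tendsto_dK)

lemma K_top: "1 / (2 * (dK 0)\<^sup>2) - 1 / (2 * (H' 0)\<^sup>2) + (1 / F\<^sup>2) * \<rho> 0 * (K 0 - 1) = 0"
proof -
  have "((\<lambda>q. (1 + (hq (q, 0))\<^sup>2) / (2 * (hp (q, 0))\<^sup>2) - 1 / (2 * (H' 0)\<^sup>2)
      + (1 / F\<^sup>2) * \<rho> 0 * (h (q, 0) - 1)) \<longlongrightarrow>
      (1 + 0\<^sup>2) / (2 * (dK 0)\<^sup>2) - 1 / (2 * (H' 0)\<^sup>2) + (1 / F\<^sup>2) * \<rho> 0 * (K 0 - 1)) Fl"
    using dK_pos[of 0] by (intro tendsto_intros hq_tendsto_0 hp_tendsto_dK h_tendsto) auto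
  moreover have "(1 + (hq (q, 0))\<^sup>2) / (2 * (hp (q, 0))\<^sup>2) - 1 / (2 * (H' 0)\<^sup>2)
      + (1 / F\<^sup>2) * \<rho> 0 * (h (q, 0) - 1) = 0" for q
    using height_eq unfolding height_eq_def by (simp add: pq_h_eq pp_h_eq dI_eqI[OF H_deriv])
  ultimately show ?thesis using tendsto_unique[OF Fl_proper _ tendsto_const] by fastforce
qed

lemma K_bot: "K (-1) = 0"
proof -
  have "((\<lambda>q. 0) \<longlongrightarrow> K (-1)) Fl"
    using h_tendsto[of "-1"] height_eq unfolding height_eq_def by simp
  from tendsto_unique[OF Fl_proper this tendsto_const] show ?thesis by simp
qed

definition "Phi p q = integral {p..0} (\<lambda>t. B (q, t))"
definition "Phi' p q = integral {p..0} (\<lambda>t. source (q, t)) - (A (q, 0) - A (q, p))"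

lemma Phi_has_derivative:
  assumes p: "p \<in> {-1..0}"
  shows "(Phi p has_real_derivative Phi' p q) (at q)"
proof -
  have sub: "UNIV \<times> {p..0} \<subseteq> Rbar" using p by (auto simp: Rbar_def)
  have "((\<lambda>x. integral (cbox p 0) (\<lambda>t. B (x, t))) has_real_derivative
      integral (cbox p 0) (\<lambda>t. Bq (q, t))) (at q within UNIV)"
  proof (rule leibniz_rule_field_derivative)
    show "((\<lambda>x. B (x, t)) has_real_derivative Bq (x, t)) (at x within UNIV)"
      if "t \<in> cbox p 0" for x t
      using B_has_derivative_q[of t x] that p by auto
    show "(\<lambda>t. B (x, t)) integrable_on cbox p 0" for x
      using p by (auto intro!: integrable_continuous_real continuous_on_vertical[OF B_cont])
    show "continuous_on (UNIV \<times> cbox p 0) (\<lambda>(x, t). Bq (x, t))"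
      using continuous_on_subset[OF Bq_cont sub] by simp
  qed auto
  moreover have "integral {p..0} (\<lambda>t. Bq (q, t)) = Phi' p q"
  proof -
    have "integral {p..0} (\<lambda>t. source (q, t) - Bq (q, t))
        = integral {p..0} (\<lambda>t. source (q, t)) - integral {p..0} (\<lambda>t. Bq (q, t))"
      using p by (intro integral_diff integrable_continuous_real
          continuous_on_vertical[OF source_cont] continuous_on_vertical[OF Bq_cont]) auto
    then show ?thesis
      using integral_unique[OF A_has_integral_p[OF p, of q]] by (simp add: Phi'_def)
  qed
  ultimately show ?thesis by (simp add: Phi_def[abs_def])
qed

lemma abs_Phi_le:
  assumes p: "p \<in> {-1..0}"
  shows "\<bar>Phi p q\<bar> \<le> C / \<delta>"
proof -
  have "norm (B (q, t)) \<le> C / \<delta>" if "t \<in> {p..0}" for t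
  proof -
    have z: "(q, t) \<in> Rbar" using that p by auto
    have "\<bar>hq (q, t)\<bar> / hp (q, t) \<le> C / \<delta>"
      using abs_hq_le[OF z] hp_ge[OF z] delta_pos C_nonneg by (intro frac_le) auto
    then show ?thesis using hp_pos[OF z] by (simp add: B_def abs_div)
  qed
  then have "norm (Phi p q) \<le> C / \<delta> * (0 - p)"
    unfolding Phi_def using p
    by (intro integral_bound integrable_continuous_real continuous_on_vertical[OF B_cont]) auto
  also have "\<dots> \<le> C / \<delta>" using p C_nonneg delta_pos by (intro mult_left_le) auto
  finally show ?thesis by simp
qed

lemma Phi'_tendsto:
  assumes p: "p \<in> {-1..0}" and \<xi>: "filterlim \<xi> Fl sequentially"
  shows "(\<lambda>n. Phi' p (\<xi> n)) \<longlonglongrightarrow> integral {p..0} source_lim - (A_lim 0 - A_lim p)"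
proof -
  define bound where "bound t = (1 / F\<^sup>2) * \<bar>\<rho>' t\<bar> * (C + \<bar>H t\<bar>)" for t
  have "(\<lambda>n. integral {p..0} (\<lambda>t. source (\<xi> n, t))) \<longlonglongrightarrow> integral {p..0} source_lim"
  proof (rule dominated_convergence(2))
    show "(\<lambda>t. source (\<xi> n, t)) integrable_on {p..0}" for n
      using p by (auto intro!: integrable_continuous_real continuous_on_vertical[OF source_cont])
    have "continuous_on {p..0} \<rho>'" "continuous_on {p..0} H"
      using p by (auto intro: continuous_on_subset[OF rho'_cont] continuous_on_subset[OF H_cont])
    then show "bound integrable_on {p..0}"
      unfolding bound_def by (intro integrable_continuous_real continuous_intros)
    show "norm (source (\<xi> n, t)) \<le> bound t" if "t \<in> {p..0}" for n t
    proof -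
      have "\<bar>h (\<xi> n, t) - H t\<bar> \<le> C + \<bar>H t\<bar>" using h_bound[of "(\<xi> n, t)"] that p by auto
      then show ?thesis
        unfolding source_def bound_def using F_pos
        by (simp add: abs_mult, intro divide_right_mono mult_left_mono) auto
    qed
    show "(\<lambda>n. source (\<xi> n, t)) \<longlonglongrightarrow> source_lim t" if "t \<in> {p..0}" for t
      unfolding source_def source_lim_def snd_conv using that p
      by (intro tendsto_intros filterlim_compose[OF h_tendsto \<xi>]) auto
  qed
  moreover have "(\<lambda>n. A (\<xi> n, p)) \<longlonglongrightarrow> A_lim p" "(\<lambda>n. A (\<xi> n, 0)) \<longlonglongrightarrow> A_lim 0"
    using filterlim_compose[OF A_tendsto \<xi>] p by auto
  ultimately show ?thesis unfolding Phi'_def by (intro tendsto_intros)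
qed

text \<open>Phi is bounded by C/\<delta>, so by the mean value theorem Phi' takes a value of size
  at most 2C/(\<delta> T) in every window of length T; these values converge to the constant L
  below, which must therefore vanish.\<close>

lemma K_height_eq:
  assumes p: "p \<in> {-1..0}"
  shows "integral {p..0} source_lim = A_lim 0 - A_lim p"
proof (rule ccontr)
  define L where "L = integral {p..0} source_lim - (A_lim 0 - A_lim p)"
  assume "integral {p..0} source_lim \<noteq> A_lim 0 - A_lim p"
  then have L: "\<bar>L\<bar> > 0" by (simp add: L_def)
  define T where "T = 4 * (C / \<delta>) / \<bar>L\<bar> + 1"
  have C\<delta>: "C / \<delta> \<ge> 0" using C_nonneg delta_pos by simp
  then have "4 * (C / \<delta>) / \<bar>L\<bar> \<ge> 0" by (intro divide_nonneg_nonneg) auto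
  then have T: "T > 0" unfolding T_def by linarith
  obtain s where s: "\<And>\<xi>. \<forall>n. s n \<le> \<xi> n \<and> \<xi> n \<le> s n + T \<Longrightarrow> filterlim \<xi> Fl sequentially"
    using Fl T unfolding translation_filter_def by blast
  have "\<exists>z. s n < z \<and> z < s n + T \<and> Phi p (s n + T) - Phi p (s n) = T * Phi' p z" for n
    using MVT2[of "s n" "s n + T" "Phi p" "Phi' p"] Phi_has_derivative[OF p] T by auto
  then obtain \<xi> where \<xi>: "\<And>n. s n < \<xi> n \<and> \<xi> n < s n + T \<and>
      Phi p (s n + T) - Phi p (s n) = T * Phi' p (\<xi> n)"
    by metis
  have "(\<lambda>n. T * Phi' p (\<xi> n)) \<longlonglongrightarrow> T * L"
    unfolding L_def using \<xi> by (intro tendsto_intros Phi'_tendsto[OF p] s) (auto intro: less_imp_le)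
  moreover have "\<bar>T * Phi' p (\<xi> n)\<bar> \<le> 2 * (C / \<delta>)" for n
    using \<xi>[of n] abs_Phi_le[OF p, of "s n + T"] abs_Phi_le[OF p, of "s n"] by linarith
  ultimately have "\<bar>T * L\<bar> \<le> 2 * (C / \<delta>)"
    by (intro tendsto_le[OF _ tendsto_const tendsto_rabs]) auto
  moreover have "\<bar>T * L\<bar> = 4 * (C / \<delta>) + \<bar>L\<bar>"
  proof -
    have "\<bar>T * L\<bar> = T * \<bar>L\<bar>" using T by (simp add: abs_mult)
    also have "\<dots> = 4 * (C / \<delta>) / \<bar>L\<bar> * \<bar>L\<bar> + \<bar>L\<bar>" by (simp add: T_def distrib_right)
    finally show ?thesis using L by simp
  qed
  ultimately show False using L C\<delta> by simp
qed

end

section \<open>Flow force of a q-independent solution\<close>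
lemma flow_force_integrand_identity:
  fixes a b F G \<rho> r w f :: real
  assumes "a \<noteq> 0" "b \<noteq> 0" "F \<noteq> 0" "f = 1 / (2 * b\<^sup>2) - 1 / (2 * a\<^sup>2)"
  shows "(1 / (2 * a\<^sup>2) + 1 / (2 * b\<^sup>2) - (1 / F\<^sup>2) * \<rho> * w + G) * a
      - (1 / (2 * b\<^sup>2) + 1 / (2 * b\<^sup>2) + G) * b
    = (- (1 / F\<^sup>2) * \<rho> * b) * w + G * (a - b) - (r * w\<^sup>2 + 2 * \<rho> * w * (a - b)) / (2 * F\<^sup>2)
      + ((1 / F\<^sup>2) * r * w * w + f * (a - b)) / 2 + (a - b)^3 / (4 * a\<^sup>2 * b\<^sup>2)"
  using assms(1-3) unfolding assms(4) by (simp add: field_simps power2_eq_square power3_eq_cube)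

locale flow_force_ode =
  fixes K K' H H' \<rho> \<rho>' :: "real \<Rightarrow> real" and F :: real
  assumes F_pos: "F > 0"
    and K_deriv: "\<And>t. t \<in> {-1..0} \<Longrightarrow> (K has_real_derivative K' t) (at t within {-1..0})"
    and K'_cont: "continuous_on {-1..0} K'"
    and K'_pos: "\<And>t. t \<in> {-1..0} \<Longrightarrow> K' t > 0"
    and H_deriv: "\<And>t. t \<in> {-1..0} \<Longrightarrow> (H has_real_derivative H' t) (at t within {-1..0})"
    and H'_cont: "continuous_on {-1..0} H'"
    and H'_pos: "\<And>t. t \<in> {-1..0} \<Longrightarrow> H' t > 0"
    and rho_deriv: "\<And>t. t \<in> {-1..0} \<Longrightarrow> (\<rho> has_real_derivative \<rho>' t) (at t within {-1..0})"
    and rho'_cont: "continuous_on {-1..0} \<rho>'"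
    and rho_pos: "\<And>t. t \<in> {-1..0} \<Longrightarrow> \<rho> t > 0"
    and rho'_nonpos: "\<And>t. t \<in> {-1..0} \<Longrightarrow> \<rho>' t \<le> 0"
    and H_bot: "H (-1) = 0" and H_top: "H 0 = 1" and K_bot: "K (-1) = 0"
    and K_eq: "\<And>p. p \<in> {-1..0} \<Longrightarrow> integral {p..0} (\<lambda>t. (1 / F\<^sup>2) * \<rho>' t * (K t - H t)) =
        (- 1 / (2 * (K' 0)\<^sup>2) + 1 / (2 * (H' 0)\<^sup>2)) - (- 1 / (2 * (K' p)\<^sup>2) + 1 / (2 * (H' p)\<^sup>2))"
    and K_top: "1 / (2 * (K' 0)\<^sup>2) - 1 / (2 * (H' 0)\<^sup>2) + (1 / F\<^sup>2) * \<rho> 0 * (K 0 - 1) = 0"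
begin

definition "w t = K t - H t"
definition "f t = 1 / (2 * (H' t)\<^sup>2) - 1 / (2 * (K' t)\<^sup>2)"
definition "g t = (1 / F\<^sup>2) * \<rho>' t * w t"
definition "G t = (1 / F\<^sup>2) * integral {t..0} (\<lambda>s. \<rho> s * H' s)"

text \<open>SK and SH are the integrands of the flow forces of K and of H.\<close>

definition "SK t = (1 / (2 * (K' t)\<^sup>2) + 1 / (2 * (H' t)\<^sup>2) - (1 / F\<^sup>2) * \<rho> t * (K t - H t) + G t) * K' t"
definition "SH t = (1 / (2 * (H' t)\<^sup>2) + 1 / (2 * (H' t)\<^sup>2) + G t) * H' t"
definition "defect t = (K' t - H' t)^3 / (4 * (K' t)\<^sup>2 * (H' t)\<^sup>2)"

definition "Psi t = G t * w t - (1 / (2 * F\<^sup>2)) * (\<rho> t * (w t * w t)) + (1 / 2) * (f t * w t)"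
definition "Psi' t = (- (1 / F\<^sup>2) * \<rho> t * H' t) * w t + G t * (K' t - H' t)
   - (\<rho>' t * (w t)\<^sup>2 + 2 * \<rho> t * w t * (K' t - H' t)) / (2 * F\<^sup>2)
   + (g t * w t + f t * (K' t - H' t)) / 2"

lemma K_cont: "continuous_on {-1..0} K"
  using K_deriv by (rule DERIV_continuous_on)

lemma H_cont: "continuous_on {-1..0} H"
  using H_deriv by (rule DERIV_continuous_on)

lemma rho_cont: "continuous_on {-1..0} \<rho>"
  using rho_deriv by (rule DERIV_continuous_on)

lemma w_has_derivative: "t \<in> {-1..0} \<Longrightarrow> (w has_real_derivative K' t - H' t) (at t within {-1..0})"
  unfolding w_def[abs_def] by (intro derivative_intros K_deriv H_deriv)

lemma g_cont: "continuous_on {-1..0} g"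
  unfolding g_def[abs_def] w_def by (intro continuous_intros rho'_cont K_cont H_cont)

lemma integral_g: "p \<in> {-1..0} \<Longrightarrow> integral {p..0} g = f 0 - f p"
  using K_eq[of p] unfolding g_def w_def f_def by linarith

lemma f_top: "f 0 = (1 / F\<^sup>2) * \<rho> 0 * w 0"
  using K_top H_top by (simp add: f_def w_def)

lemma f_has_derivative:
  assumes t: "t \<in> {-1..0}"
  shows "(f has_real_derivative g t) (at t within {-1..0})"
proof -
  have "((\<lambda>p. f 0 - integral {p..0} g) has_real_derivative g t) (at t within {-1..0})"
    using DERIV_diff[OF DERIV_const[of "f 0"] integral_to_zero_has_real_derivative[OF g_cont t]]
    by simp
  then show ?thesis
    by (rule has_field_derivative_transform_within[OF _ zero_less_one t]) (simp add: integral_g)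
qed

lemma G_has_derivative:
  "t \<in> {-1..0} \<Longrightarrow> (G has_real_derivative - (1 / F\<^sup>2) * \<rho> t * H' t) (at t within {-1..0})"
  unfolding G_def[abs_def]
  by (rule DERIV_cong[OF DERIV_cmult[OF integral_to_zero_has_real_derivative]])
     (auto intro!: continuous_intros rho_cont H'_cont)

lemma G_cont: "continuous_on {-1..0} G"
  using G_has_derivative by (rule DERIV_continuous_on)

lemma Psi_has_derivative:
  assumes t: "t \<in> {-1..0}"
  shows "(Psi has_real_derivative Psi' t) (at t within {-1..0})"
proof -
  have "Psi = (\<lambda>x. G x * w x - 1 / (2 * F\<^sup>2) * (\<rho> x * (w x * w x)) + 1 / 2 * (f x * w x))"
    by (simp add: fun_eq_iff Psi_def)
  then show ?thesis
    using F_pos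
    by (auto intro!: derivative_eq_intros G_has_derivative[OF t] w_has_derivative[OF t]
        rho_deriv[OF t] f_has_derivative[OF t] simp: Psi'_def power2_eq_square field_simps)
qed

lemma Psi_bot: "Psi (-1) = 0"
  by (simp add: Psi_def w_def K_bot H_bot)

lemma Psi_top: "Psi 0 = 0"
  by (simp add: Psi_def G_def f_top power2_eq_square)

lemma SK_minus_SH: "t \<in> {-1..0} \<Longrightarrow> SK t - SH t = Psi' t + defect t"
  using flow_force_integrand_identity[of "K' t" "H' t" F "f t" "\<rho> t" "K t - H t" "G t" "\<rho>' t"]
    K'_pos[of t] H'_pos[of t] F_pos
  unfolding SK_def SH_def Psi'_def defect_def g_def by (simp add: w_def f_def)

lemma defect_cont: "continuous_on {-1..0} defect"
  unfolding defect_def[abs_def] using K'_pos H'_pos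
  by (intro continuous_intros K'_cont H'_cont) force

lemma integral_rho_dI_H:
  "p \<in> {-1..0} \<Longrightarrow> integral {p..0} (\<lambda>s. \<rho> s * dI H s) = integral {p..0} (\<lambda>s. \<rho> s * H' s)"
  by (intro integral_cong) (simp add: dI_eqI[OF H_deriv])

lemma flow_force_K: "flow_force \<rho> H F K = integral {-1..0} SK"
  unfolding flow_force_def
  by (intro integral_cong) (simp add: SK_def G_def dI_eqI[OF K_deriv] dI_eqI[OF H_deriv] integral_rho_dI_H)

lemma flow_force_H: "flow_force \<rho> H F H = integral {-1..0} SH"
  unfolding flow_force_def
  by (intro integral_cong) (simp add: SH_def G_def dI_eqI[OF H_deriv] integral_rho_dI_H)

lemma defect_has_integral_0:
  assumes "flow_force \<rho> H F K = flow_force \<rho> H F H"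
  shows "(defect has_integral 0) {-1..0}"
proof -
  have nz: "\<forall>t\<in>{-1..0}. K' t \<noteq> 0" "\<forall>t\<in>{-1..0}. H' t \<noteq> 0"
    using K'_pos H'_pos by (simp_all add: less_imp_neq[symmetric])
  have SK: "SK integrable_on {-1..0}"
    unfolding SK_def[abs_def] using nz
    by (intro integrable_continuous_real continuous_intros K'_cont H'_cont rho_cont K_cont H_cont
        G_cont) auto
  have SH: "SH integrable_on {-1..0}"
    unfolding SH_def[abs_def] using nz
    by (intro integrable_continuous_real continuous_intros H'_cont G_cont) auto
  from has_integral_diff[OF integrable_integral[OF SK] integrable_integral[OF SH]]
  have SK_SH: "((\<lambda>t. SK t - SH t) has_integral 0) {-1..0}"
    using assms by (simp add: flow_force_K flow_force_H)
  have "(Psi' has_integral Psi 0 - Psi (-1)) {-1..0}"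
    by (rule fundamental_theorem_of_calculus)
       (auto simp: has_real_derivative_iff_has_vector_derivative[symmetric] intro: Psi_has_derivative)
  then have Psi': "(Psi' has_integral 0) {-1..0}" by (simp add: Psi_bot Psi_top)
  from has_integral_diff[OF SK_SH Psi']
  have "((\<lambda>t. SK t - SH t - Psi' t) has_integral 0) {-1..0}" by simp
  then show ?thesis by (rule has_integral_eq[rotated]) (simp add: SK_minus_SH)
qed

text \<open>The ODE propagates a sign of w to f (since \<rho>' \<le> 0 and \<rho> > 0), and f has the sign of
  K' - H'.\<close>

lemma defect_sign:
  assumes w: "\<And>t. t \<in> {-1..0} \<Longrightarrow> \<sigma> * w t \<ge> 0" and t: "t \<in> {-1..0}"
  shows "\<sigma> * defect t \<ge> 0"
proof -
  have F2: "F\<^sup>2 > 0" using F_pos by simp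
  have "integral {t..0} (\<lambda>s. - (\<sigma> * g s)) \<ge> 0"
  proof (rule integral_nonneg)
    show "(\<lambda>s. - (\<sigma> * g s)) integrable_on {t..0}"
      using t by (intro integrable_continuous_real continuous_intros continuous_on_subset[OF g_cont]) auto
    fix s assume "s \<in> {t..0}"
    then have "\<rho>' s * (\<sigma> * w s) \<le> 0" using t by (intro mult_nonpos_nonneg rho'_nonpos w) auto
    moreover have "\<sigma> * g s = \<rho>' s * (\<sigma> * w s) / F\<^sup>2" by (simp add: g_def mult_ac)
    ultimately show "0 \<le> - (\<sigma> * g s)" using F2 by (simp add: divide_nonpos_pos)
  qed
  moreover have "\<sigma> * f 0 \<ge> 0"
  proof -
    have "0 \<le> \<rho> 0 * (\<sigma> * w 0) / F\<^sup>2" using w[of 0] rho_pos[of 0] by simp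
    then show ?thesis by (simp add: f_top mult_ac)
  qed
  ultimately have f: "\<sigma> * f t \<ge> 0"
    using integral_g[OF t] by (simp add: right_diff_distrib)
  define c where "c = (K' t + H' t) / (2 * (K' t)\<^sup>2 * (H' t)\<^sup>2)"
  have c: "c > 0" using K'_pos[OF t] H'_pos[OF t] by (simp add: c_def)
  have "f t = (K' t - H' t) * c"
    using K'_pos[OF t] H'_pos[OF t] by (simp add: f_def c_def field_simps power2_eq_square)
  with f have "0 \<le> \<sigma> * (K' t - H' t) * c" by (simp add: mult.assoc)
  with c have "\<sigma> * (K' t - H' t) \<ge> 0" by (simp add: zero_le_mult_iff)
  moreover have "\<sigma> * defect t = \<sigma> * (K' t - H' t) * ((K' t - H' t)\<^sup>2 / (4 * (K' t)\<^sup>2 * (H' t)\<^sup>2))"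
    by (simp add: defect_def power2_eq_square power3_eq_cube)
  ultimately show ?thesis by simp
qed

lemma eq_H_if_flow_force_eq:
  assumes S: "flow_force \<rho> H F K = flow_force \<rho> H F H"
    and sign: "(\<forall>t\<in>{-1..0}. K t \<ge> H t) \<or> (\<forall>t\<in>{-1..0}. K t \<le> H t)"
  shows "\<forall>t\<in>{-1..0}. K t = H t"
proof -
  obtain \<sigma> :: real where \<sigma>: "\<sigma> \<noteq> 0" and w: "\<And>t. t \<in> {-1..0} \<Longrightarrow> \<sigma> * w t \<ge> 0"
  proof (cases "\<forall>t\<in>{-1..0}. K t \<ge> H t")
    case True
    then show ?thesis using that[of 1] by (simp add: w_def)
  next
    case False
    with sign show ?thesis using that[of "-1"] by (simp add: w_def)
  qed
  have "((\<lambda>t. \<sigma> * defect t) has_integral 0) {-1..0}"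
    using has_integral_mult_right[OF defect_has_integral_0[OF S], of \<sigma>] by simp
  then have zero: "\<sigma> * defect t = 0" if "t \<in> {-1..0}" for t
    using that defect_sign[OF w]
    by (intro has_integral_0_cbox_imp_0[of "-1" 0 "\<lambda>t. \<sigma> * defect t"])
       (auto simp: box_real intro!: continuous_intros defect_cont)
  have "(w has_real_derivative 0) (at t within {-1..0})" if t: "t \<in> {-1..0}" for t
    using w_has_derivative[OF t] zero[OF t] \<sigma> K'_pos[OF t] H'_pos[OF t]
    by (simp add: defect_def)
  then have "norm (w t - w (-1)) \<le> 0 * norm (t - (-1))" if "t \<in> {-1..0}" for t
    by (intro field_differentiable_bound[of "{-1..0}" w "\<lambda>_. 0"]) (use that in auto)
  then show ?thesis by (simp add: w_def K_bot H_bot)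
qed

end

lemma (in height_limit) limit_profile_eq_H:
  assumes rho_pos: "\<And>t. t \<in> {-1..0} \<Longrightarrow> \<rho> t > 0"
    and rho'_nonpos: "\<And>t. t \<in> {-1..0} \<Longrightarrow> \<rho>' t \<le> 0"
    and H_bot: "H (-1) = 0" and H_top: "H 0 = 1"
    and S: "flow_force \<rho> H F K = flow_force \<rho> H F H"
    and sign: "(\<forall>t\<in>{-1..0}. K t \<ge> H t) \<or> (\<forall>t\<in>{-1..0}. K t \<le> H t)"
  shows "\<forall>t\<in>{-1..0}. K t = H t"
proof -
  interpret limit: flow_force_ode K dK H H' \<rho> \<rho>' F
  proof
    show "integral {p..0} (\<lambda>t. 1 / F\<^sup>2 * \<rho>' t * (K t - H t)) =
        - 1 / (2 * (dK 0)\<^sup>2) + 1 / (2 * (H' 0)\<^sup>2) - (- 1 / (2 * (dK p)\<^sup>2) + 1 / (2 * (H' p)\<^sup>2))"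
      if "p \<in> {-1..0}" for p
      using K_height_eq[OF that] unfolding source_lim_def[abs_def] A_lim_def by simp
  qed (use F_pos K_has_derivative dK_cont dK_pos H_deriv H'_cont H'_pos rho_deriv rho'_cont
      rho_pos rho'_nonpos H_bot H_top K_bot K_top in auto)
  show ?thesis by (rule limit.eq_H_if_flow_force_eq[OF S sign])
qed

lemma C2_bounded_strip_imp_strip:
  assumes "C2_bounded_strip h" and "\<exists>\<delta>>0. \<forall>z\<in>Ropen. pp h z \<ge> \<delta>"
  obtains Dh D2h C \<delta> where "strip h Dh D2h C \<delta>"
proof -
  obtain Dh D2h where deriv: "\<forall>z\<in>Rbar. (h has_derivative blinfun_apply (Dh z)) (at z within Rbar) \<and>
      (Dh has_derivative blinfun_apply (D2h z)) (at z within Rbar)"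
    and cont: "continuous_on Rbar D2h"
    and "bounded (h ` Rbar)" "bounded (Dh ` Rbar)" "bounded (D2h ` Rbar)"
    using assms(1) unfolding C2_bounded_strip_def by blast
  then obtain B1 B2 B3 where B: "\<forall>z\<in>Rbar. norm (h z) \<le> B1" "\<forall>z\<in>Rbar. norm (Dh z) \<le> B2"
    "\<forall>z\<in>Rbar. norm (D2h z) \<le> B3"
    unfolding bounded_iff by (metis image_eqI)
  obtain \<delta> where \<delta>: "\<delta> > 0" "\<forall>z\<in>Ropen. pp h z \<ge> \<delta>" using assms(2) by blast
  have "strip h Dh D2h (max B1 (max B2 B3)) \<delta>"
  proof
    show "\<bar>h z\<bar> \<le> max B1 (max B2 B3)" "norm (Dh z) \<le> max B1 (max B2 B3)"
      "norm (D2h z) \<le> max B1 (max B2 B3)" if "z \<in> Rbar" for z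
      using B that by (simp_all add: le_max_iff_disj)
  qed (use deriv cont \<delta> in auto)
  then show ?thesis by (rule that)
qed

lemma height_eq_limit_profile_eq_H:
  fixes Fl :: "real filter" and K :: "real \<Rightarrow> real"
  assumes Fl: "translation_filter Fl"
    and F_pos: "F > 0"
    and rho_deriv: "\<And>t. t \<in> {-1..0} \<Longrightarrow> (\<rho> has_real_derivative \<rho>' t) (at t within {-1..0})"
    and rho'_cont: "continuous_on {-1..0} \<rho>'"
    and rho_pos: "\<And>t. t \<in> {-1..0} \<Longrightarrow> \<rho> t > 0"
    and rho'_nonpos: "\<And>t. t \<in> {-1..0} \<Longrightarrow> \<rho>' t \<le> 0"
    and H_deriv: "\<And>t. t \<in> {-1..0} \<Longrightarrow> (H has_real_derivative H' t) (at t within {-1..0})"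
    and H'_deriv: "\<And>t. t \<in> {-1..0} \<Longrightarrow> (H' has_real_derivative H'' t) (at t within {-1..0})"
    and H'_pos: "\<And>t. t \<in> {-1..0} \<Longrightarrow> H' t > 0"
    and H_bot: "H (-1) = 0" and H_top: "H 0 = 1"
    and h_reg: "C2_bounded_strip h" and h_eq: "height_eq \<rho> H F h"
    and h_inf: "\<exists>\<delta>>0. \<forall>z\<in>Ropen. pp h z \<ge> \<delta>"
    and lim: "\<forall>p\<in>{-1..0}. ((\<lambda>q. h (q, p)) \<longlongrightarrow> K p) Fl"
    and S: "flow_force \<rho> H F K = flow_force \<rho> H F H"
    and sign: "(\<forall>p\<in>{-1..0}. K p \<ge> H p) \<or> (\<forall>p\<in>{-1..0}. K p \<le> H p)"
  shows "\<forall>p\<in>{-1..0}. K p = H p"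
proof -
  obtain Dh D2h C \<delta> where "strip h Dh D2h C \<delta>"
    using C2_bounded_strip_imp_strip[OF h_reg h_inf] .
  then interpret height_limit h Dh D2h C \<delta> Fl K \<rho> H F \<rho>' H' H''
    using Fl F_pos rho_deriv rho'_cont H_deriv H'_deriv H'_pos h_eq lim
    by (intro height_limit.intro strip_limit.intro height_limit_axioms.intro
        strip_limit_axioms.intro) auto
  show ?thesis by (rule limit_profile_eq_H[OF rho_pos rho'_nonpos H_bot H_top S sign])
qed

theorem corollary4p11:
  fixes \<alpha> F :: real and \<rho> H Hplus Hminus :: "real \<Rightarrow> real"
    and h :: "real \<times> real \<Rightarrow> real"
  assumes alpha: "0 < \<alpha>" "\<alpha> < 1"
    and rho_reg: "C_k_alpha 2 \<alpha> \<rho>"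
    and rho_pos: "\<forall>p\<in>{-1..0}. \<rho> p > 0"
    and rho_dec: "\<forall>p\<in>{-1..0}. dI \<rho> p \<le> 0"
    and H_reg: "C_k_alpha 3 \<alpha> H"
    and H_bot: "H (-1) = 0" and H_top: "H 0 = 1"
    and H_inc: "\<forall>p\<in>{-1..0}. dI H p > 0"
    and F_pos: "F > 0"
    and h_reg: "C2_bounded_strip h"
    and h_eq: "height_eq \<rho> H F h"
    and h_inf: "\<exists>\<delta>>0. \<forall>z\<in>Ropen. pp h z \<ge> \<delta>"
    and lim_plus: "\<forall>p\<in>{-1..0}. ((\<lambda>q. h (q, p)) \<longlongrightarrow> Hplus p) at_top"
    and lim_minus: "\<forall>p\<in>{-1..0}. ((\<lambda>q. h (q, p)) \<longlongrightarrow> Hminus p) at_bot"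
    and S_plus: "flow_force \<rho> H F Hplus = flow_force \<rho> H F H"
    and S_minus: "flow_force \<rho> H F Hminus = flow_force \<rho> H F H"
  shows "((\<forall>p\<in>{-1..0}. Hplus p \<ge> H p) \<or> (\<forall>p\<in>{-1..0}. Hplus p \<le> H p)
            \<longrightarrow> (\<forall>p\<in>{-1..0}. Hplus p = H p))
       \<and> ((\<forall>p\<in>{-1..0}. Hminus p \<ge> H p) \<or> (\<forall>p\<in>{-1..0}. Hminus p \<le> H p)
            \<longrightarrow> (\<forall>p\<in>{-1..0}. Hminus p = H p))"
proof -
  obtain \<rho>' \<rho>'' where rho_deriv: "\<And>t. t \<in> {-1..0} \<Longrightarrow> (\<rho> has_real_derivative \<rho>' t) (at t within {-1..0})"
    and rho'_deriv: "\<And>t. t \<in> {-1..0} \<Longrightarrow> (\<rho>' has_real_derivative \<rho>'' t) (at t within {-1..0})"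
    using rho_reg unfolding numeral_2_eq_2 by (metis C_k_alpha_SucD)
  obtain H' H'' where H_deriv: "\<And>t. t \<in> {-1..0} \<Longrightarrow> (H has_real_derivative H' t) (at t within {-1..0})"
    and H'_deriv: "\<And>t. t \<in> {-1..0} \<Longrightarrow> (H' has_real_derivative H'' t) (at t within {-1..0})"
    using H_reg unfolding numeral_3_eq_3 by (metis C_k_alpha_SucD)
  have rho'_nonpos: "\<rho>' t \<le> 0" and H'_pos: "H' t > 0" if "t \<in> {-1..0}" for t
    using bspec[OF rho_dec that] bspec[OF H_inc that] dI_eqI[OF rho_deriv[OF that] that]
      dI_eqI[OF H_deriv[OF that] that]
    by simp_all
  have limit_profile: "\<forall>p\<in>{-1..0}. K p = H p"
    if "translation_filter Fl" "\<forall>p\<in>{-1..0}. ((\<lambda>q. h (q, p)) \<longlongrightarrow> K p) Fl"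
      "flow_force \<rho> H F K = flow_force \<rho> H F H"
      "(\<forall>p\<in>{-1..0}. K p \<ge> H p) \<or> (\<forall>p\<in>{-1..0}. K p \<le> H p)"
    for Fl K
    by (rule height_eq_limit_profile_eq_H[where \<rho>' = \<rho>' and H' = H' and H'' = H''])
       (use that F_pos rho_pos H_bot H_top h_reg h_eq h_inf rho_deriv H_deriv H'_deriv rho'_nonpos
         H'_pos DERIV_continuous_on[OF rho'_deriv] in auto)
  show ?thesis
  proof (intro conjI impI)
    show "\<forall>p\<in>{-1..0}. Hplus p = H p"
      if "(\<forall>p\<in>{-1..0}. Hplus p \<ge> H p) \<or> (\<forall>p\<in>{-1..0}. Hplus p \<le> H p)"
      using limit_profile[OF translation_filter_at_top lim_plus S_plus that] .
    show "\<forall>p\<in>{-1..0}. Hminus p = H p"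
      if "(\<forall>p\<in>{-1..0}. Hminus p \<ge> H p) \<or> (\<forall>p\<in>{-1..0}. Hminus p \<le> H p)"
      using limit_profile[OF translation_filter_at_bot lim_minus S_minus that] .
  qed
qed

end
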